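(* In the PIR-PSI under a storage constraint problem described in the context, fix $N$, $K$ and the cache size $S$. Among all caching schemes, i.e., all $M$ with $S\le M\le K$ and all $(r_1,\dots,r_M)\in[0,1]^M$ with $\sum_{i=1}^M r_i=S$, the uniform caching scheme with $M=K$ (caching the first $\frac{S}{K}L$ symbols of every message) achieves the lowest optimal normalized download cost.
   Context: Model: $N$ non-communicating databases each store the same $K$ independent messages $W_1,\dots,W_K$ of $L$ symbols each. The user has a cache of $SL$ symbols, $S\in[0,K]$. It accesses a random set $\mathbb{H}$ of $M$ messages ($S\le M\le K$) and caches the first $Lr_i$ symbols of the $i$-th accessed message, $\sum_i r_i=S$. The databases know $M$ and $(r_1,\dots,r_M)$ but not $\mathbb{H}$. The user wants $W_\theta$, sends queries independent of the messages, each database answers with a deterministic function of its query and the messages; the user must decode $W_\theta$ with error entropy $o(L)$, and each database's joint distribution of (query, answer, messages) must not depend on $(\theta,\mathbb{H})$. Download $D=\sum_n H(A_n)$, and $D^*=\inf D/L$ over achievable schemes; for a caching scheme with $r_1\ge\dots\ge r_M$, $D^*=1+\frac1N+\dots+\frac1{N^{K-1-M}}+\sum_{j=1}^{M}\frac{1-r_j}{N^{K-j}}$. *)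

theory Defs
  imports Complex_Main "HOL-Library.Multiset"
begin

text \<open>Optimal normalized download cost of the PIR-PSI problem under a storage
constraint, for a caching scheme given by the list r = [r_1,...,r_M] of cached
fractions (M = length r). The capacity formula of the paper assumes
r_1 \<ge> ... \<ge> r_M; for an arbitrary list we first sort it in decreasing order
(the databases know r, so relabelling the accessed messages does not change the cost).\<close>

definition pir_psi_cost :: "nat \<Rightarrow> nat \<Rightarrow> real list \<Rightarrow> real" where
  "pir_psi_cost N K r =
     (let rs = rev (sort r); M = length r in
       (\<Sum>i<K - M. 1 / real N ^ i)
       + (\<Sum>j\<in>{1..M}. (1 - rs ! (j - 1)) / real N ^ (K - j)))"

end

theory Submission
  imports Defs
begin

text \<open>Sort the cached fractions decreasingly and pad them with zeros for the K - M messages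
that are not accessed, giving a profile p_0 \<ge> ... \<ge> p_(K-1) with sum S. Then
D* = \<Sum>_k (1 - p_k) w_k with weights w_k = N^-(K-1-k) increasing in k, so Chebyshev's sum
inequality gives \<Sum>_k p_k w_k \<le> (S/K) \<Sum>_k w_k, which is exactly the saving of the uniform
profile p_k = S/K.\<close>

definition cache_profile :: "nat \<Rightarrow> real list \<Rightarrow> real list" where
  "cache_profile K r = rev (sort r) @ replicate (K - length r) 0"

lemma length_cache_profile: "length r \<le> K \<Longrightarrow> length (cache_profile K r) = K"
  by (simp add: cache_profile_def)

lemma sum_list_cache_profile: "sum_list (cache_profile K r) = sum_list r"
  by (simp add: cache_profile_def sum_list_rev flip: sum_mset_sum_list)

lemma cache_profile_replicate: "cache_profile K (replicate K c) = replicate K c"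
  by (simp add: cache_profile_def)

lemma sorted_wrt_cache_profile:
  assumes "\<forall>x\<in>set r. 0 \<le> x"
  shows "sorted_wrt (\<ge>) (cache_profile K r)"
proof -
  have "sorted_wrt (\<ge>) (replicate (K - length r) (0::real))"
    by (simp add: sorted_wrt_iff_nth_less)
  with assms show ?thesis
    by (auto simp: cache_profile_def sorted_wrt_append sorted_wrt_rev)
qed

lemma cache_profile_nth_antimono:
  assumes "\<forall>x\<in>set r. 0 \<le> x" "length r \<le> K" "i \<le> j" "j < K"
  shows "cache_profile K r ! j \<le> cache_profile K r ! i"
  using sorted_wrt_nth_less[OF sorted_wrt_cache_profile[OF assms(1)], of i j] assms
  by (cases "i = j") (auto simp: length_cache_profile)

lemma pir_psi_cost_eq_cache_profile:
  assumes "length r \<le> K"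
  shows "pir_psi_cost N K r = (\<Sum>k<K. (1 - cache_profile K r ! k) / real N ^ (K - 1 - k))"
proof -
  define M where "M = length r"
  define f where "f k = (1 - cache_profile K r ! k) / real N ^ (K - 1 - k)" for k
  have uncached: "(\<Sum>i<K - M. 1 / real N ^ i) = (\<Sum>k\<in>{M..<K}. f k)"
    by (rule sum.reindex_bij_witness[where i="\<lambda>k. K - 1 - k" and j="\<lambda>i. K - 1 - i"])
      (auto simp: M_def f_def cache_profile_def nth_append)
  have cached: "(\<Sum>j\<in>{1..M}. (1 - rev (sort r) ! (j - 1)) / real N ^ (K - j)) = (\<Sum>k<M. f k)"
    by (rule sum.reindex_bij_witness[where i=Suc and j="\<lambda>j. j - 1"])
      (auto simp: M_def f_def cache_profile_def nth_append)
  have "pir_psi_cost N K r = (\<Sum>k\<in>{M..<K}. f k) + (\<Sum>k<M. f k)"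
    unfolding pir_psi_cost_def Let_def M_def[symmetric] uncached cached ..
  also have "\<dots> = (\<Sum>k<K. f k)"
    using sum.atLeastLessThan_concat[of 0 M K f] assms by (simp add: M_def atLeast0LessThan)
  finally show ?thesis
    by (simp only: f_def)
qed

lemma one_div_power_diff_mono:
  fixes x :: real
  assumes "1 \<le> x" "i \<le> j"
  shows "1 / x ^ (n - i) \<le> 1 / x ^ (n - j)"
  using assms by (intro divide_left_mono power_increasing) auto

lemma sum_mult_le_mean_mult_sum:
  fixes a w :: "nat \<Rightarrow> real"
  assumes "\<And>i j. i \<le> j \<Longrightarrow> j < n \<Longrightarrow> w i \<le> w j"
    and "\<And>i j. i \<le> j \<Longrightarrow> j < n \<Longrightarrow> a j \<le> a i"
  shows "(\<Sum>k<n. a k * w k) \<le> (\<Sum>k<n. a k) / real n * (\<Sum>k<n. w k)"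
proof (cases "n = 0")
  case False
  have "real n * (\<Sum>k<n. w k * a k) \<le> (\<Sum>k<n. w k) * (\<Sum>k<n. a k)"
    using Chebyshev_sum_upper[of n w a] assms by (simp add: atLeast0LessThan)
  with False show ?thesis by (simp add: field_simps mult.commute)
qed simp

theorem corollary3:
  fixes N K :: nat and S :: real
  assumes "N \<ge> 1" and "K \<ge> 1" and "0 \<le> S" and "S \<le> real K"
  shows "\<forall>M r. S \<le> real M \<and> M \<le> K \<and> length r = M
            \<and> (\<forall>x\<in>set r. 0 \<le> x \<and> x \<le> 1) \<and> sum_list r = S
          \<longrightarrow> pir_psi_cost N K (replicate K (S / real K)) \<le> pir_psi_cost N K r"
proof (intro allI impI)
  fix M r
  assume "S \<le> real M \<and> M \<le> K \<and> length r = M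
            \<and> (\<forall>x\<in>set r. 0 \<le> x \<and> x \<le> 1) \<and> sum_list r = S"
  then have len: "length r \<le> K" and nonneg: "\<forall>x\<in>set r. 0 \<le> x" and sum: "sum_list r = S"
    by auto
  have "1 \<le> real N" using assms(1) by simp
  define w where "w k = 1 / real N ^ (K - 1 - k)" for k
  define p where "p = cache_profile K r"
  have cost_eq: "pir_psi_cost N K q = (\<Sum>k<K. w k) - (\<Sum>k<K. cache_profile K q ! k * w k)"
    if "length q \<le> K" for q
    using pir_psi_cost_eq_cache_profile[OF that, of N]
    by (simp add: w_def diff_divide_distrib sum_subtractf)
  have "(\<Sum>k<K. p ! k) = S"
    using sum_list_sum_nth[of p] sum_list_cache_profile[of K r] len sum
    by (simp add: p_def length_cache_profile atLeast0LessThan)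
  moreover have "(\<Sum>k<K. p ! k * w k) \<le> (\<Sum>k<K. p ! k) / real K * (\<Sum>k<K. w k)"
    using \<open>1 \<le> real N\<close> nonneg len unfolding w_def p_def
    by (intro sum_mult_le_mean_mult_sum one_div_power_diff_mono cache_profile_nth_antimono)
  ultimately have "pir_psi_cost N K r \<ge> (\<Sum>k<K. w k) - S / real K * (\<Sum>k<K. w k)"
    using cost_eq[OF len] by (simp add: p_def)
  moreover have "pir_psi_cost N K (replicate K (S / real K)) = (\<Sum>k<K. w k) - S / real K * (\<Sum>k<K. w k)"
    using cost_eq[of "replicate K (S / real K)"]
    by (simp add: cache_profile_replicate sum_distrib_left)
  ultimately show "pir_psi_cost N K (replicate K (S / real K)) \<le> pir_psi_cost N K r"
    by simp
qed

end
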